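(* Let $\lambda>0$, $a>0$ and $E\in\mathbb{R}$ be fixed, and for $\varepsilon>0$ consider the linear slow-fast system of SDEs \[ dX = -\lambda(X+Y)\,dt + E\sin(at)\,dt + dW_x,\qquad dY = \tfrac{1}{\varepsilon}(X-Y)\,dt + \tfrac{1}{\sqrt{\varepsilon}}\,dW_y, \] together with the approximate macroscopic model \[ d\bar X = -2\lambda \bar X\,dt + E\sin(at)\,dt + dW_x . \] The means $(\mu_X(t),\mu_Y(t))=(\mathbb{E}[X_t],\mathbb{E}[Y_t])$ satisfy the linear ODE $\mu_X'=-\lambda(\mu_X+\mu_Y)+E\sin(at)$, $\mu_Y'=\frac{1}{\varepsilon}(\mu_X-\mu_Y)$, and $\bar\mu_X(t)=\mathbb{E}[\bar X_t]$ satisfies $\bar\mu_X'=-2\lambda\bar\mu_X+E\sin(at)$. Let $\mu_X^{\mathrm{per},\varepsilon}$ denote the $X$-component of the unique $2\pi/a$-periodic solution of the first ODE system, and $\bar\mu_X^{\mathrm{per}}$ the unique $2\pi/a$-periodic solution of the second ODE. Then there exist constants $C>0$ and $\varepsilon_0>0$ (depending on $\lambda,a,E$) such that for all $\varepsilon\in(0,\varepsilon_0)$, \[ \Big\|\mu_X^{\mathrm{per},\varepsilon}-\bar\mu_X^{\mathrm{per}}\Big\|_{L^2([0,2\pi/a])}\le C\,\varepsilon, \] i.e. the $L_2$-error between the slow means of the full system and of the approximate macroscopic model decreases (at least) linearly to zero as $\varepsilon\to 0$.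
   Context: $W_x$ and $W_y$ are independent standard one-dimensional Brownian motions. The "periodic solution" is the invariant periodic orbit of the mean dynamics (the mean evolution started on the invariant curve), on which the error is measured in $L_2$ over one period of the forcing. *)

theory Defs
  imports "HOL-Analysis.Analysis"
begin

definition full_mean_periodic ::
  "real \<Rightarrow> real \<Rightarrow> real \<Rightarrow> real \<Rightarrow> (real \<Rightarrow> real) \<Rightarrow> (real \<Rightarrow> real) \<Rightarrow> bool" where
  "full_mean_periodic lam a E eps mx my \<longleftrightarrow>
     (\<forall>t. (mx has_real_derivative (- lam * (mx t + my t) + E * sin (a * t))) (at t)) \<and>
     (\<forall>t. (my has_real_derivative ((mx t - my t) / eps)) (at t)) \<and>
     (\<forall>t. mx (t + 2 * pi / a) = mx t \<and> my (t + 2 * pi / a) = my t)"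

definition avg_mean_periodic :: "real \<Rightarrow> real \<Rightarrow> real \<Rightarrow> (real \<Rightarrow> real) \<Rightarrow> bool" where
  "avg_mean_periodic lam a E m \<longleftrightarrow>
     (\<forall>t. (m has_real_derivative (- 2 * lam * m t + E * sin (a * t))) (at t)) \<and>
     (\<forall>t. m (t + 2 * pi / a) = m t)"

definition muX_per :: "real \<Rightarrow> real \<Rightarrow> real \<Rightarrow> real \<Rightarrow> real \<Rightarrow> real" where
  "muX_per lam a E eps = fst (THE p. full_mean_periodic lam a E eps (fst p) (snd p))"

definition barmuX_per :: "real \<Rightarrow> real \<Rightarrow> real \<Rightarrow> real \<Rightarrow> real" where
  "barmuX_per lam a E = (THE m. avg_mean_periodic lam a E m)"

definition L2_norm_on :: "real \<Rightarrow> (real \<Rightarrow> real) \<Rightarrow> real" where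
  "L2_norm_on T f = sqrt (integral {0..T} (\<lambda>t. (f t)\<^sup>2))"

end

theory Submission
  imports Defs
begin

text \<open>Both mean equations are linear with a strictly dissipative homogeneous part: for the
  difference of two periodic solutions, (x, y) \<mapsto> x^2 + \<lambda>\<epsilon> y^2 (resp. x^2) is a periodic Lyapunov
  function, so the periodic solutions are unique.  They are harmonics Im (w exp(i a t)), whose complex
  amplitudes solve linear equations: the Y-amplitude is E / z(\<epsilon>) with
  z(\<epsilon>) = (2\<lambda> - a^2 \<epsilon>) + i a (1 + \<lambda>\<epsilon>), the X-amplitude is (1 + i a \<epsilon>) times it, and the averaged
  amplitude is the value at \<epsilon> = 0.  The two X-amplitudes differ by exactly
  \<epsilon> i a \<lambda> E / (z(\<epsilon>) z(0)), and |z(\<epsilon>)| \<ge> a, so the error is at most \<epsilon> \<lambda> |E| / a pointwise.\<close>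

lemma periodic_deriv_nonpos_imp_deriv_zero:
  fixes V V' :: "real \<Rightarrow> real"
  assumes deriv: "\<And>t. (V has_real_derivative V' t) (at t)"
    and nonpos: "\<And>t. V' t \<le> 0" and periodic: "\<And>t. V (t + T) = V t" and "T > 0"
  shows "V' s = 0"
proof -
  have antimono: "V y \<le> V x" if "x \<le> y" for x y
    using DERIV_nonpos_imp_nonincreasing[OF that] deriv nonpos by blast
  have "V y \<le> V s" if "\<bar>s - y\<bar> < T/2" for y
  proof -
    define t where "t = s - T/2"
    have "t \<le> y" "y \<le> t + T" "t \<le> s" "s \<le> t + T"
      using that \<open>T > 0\<close> unfolding t_def by (auto simp: abs_if split: if_splits)
    then have "V y \<le> V t" "V (t + T) \<le> V s"
      using antimono by auto
    then show ?thesis using periodic[of t] by simp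
  qed
  then show ?thesis
    using DERIV_local_max[OF deriv[of s], of "T/2"] \<open>T > 0\<close> by simp
qed

lemma avg_mean_periodic_unique:
  assumes "lam > 0" "a > 0" "avg_mean_periodic lam a E m1" "avg_mean_periodic lam a E m2"
  shows "m1 = m2"
proof
  fix s
  define d where "d t = m1 t - m2 t" for t
  have d_deriv: "(d has_real_derivative (-2 * lam * d t)) (at t)" for t
    using assms(3,4) unfolding avg_mean_periodic_def d_def
    by (auto intro!: derivative_eq_intros simp: algebra_simps)
  have "((\<lambda>t. (d t)\<^sup>2) has_real_derivative (-4 * lam * (d t)\<^sup>2)) (at t)" for t
    by (rule derivative_eq_intros d_deriv refl | simp add: power2_eq_square)+
  moreover have "(d (t + 2 * pi / a))\<^sup>2 = (d t)\<^sup>2" for t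
    using assms(3,4) unfolding avg_mean_periodic_def d_def by simp
  ultimately have "-4 * lam * (d s)\<^sup>2 = 0"
    using periodic_deriv_nonpos_imp_deriv_zero[of "\<lambda>t. (d t)\<^sup>2" "\<lambda>t. -4 * lam * (d t)\<^sup>2" "2 * pi / a"]
      assms(1,2) by simp
  then show "m1 s = m2 s" using assms(1) unfolding d_def by simp
qed

lemma full_mean_periodic_unique:
  assumes "lam > 0" "a > 0" "eps > 0"
    and "full_mean_periodic lam a E eps x1 y1" "full_mean_periodic lam a E eps x2 y2"
  shows "x1 = x2 \<and> y1 = y2"
proof -
  define x where "x t = x1 t - x2 t" for t
  define y where "y t = y1 t - y2 t" for t
  define V where "V t = (x t)\<^sup>2 + lam * eps * (y t)\<^sup>2" for t
  have x_deriv: "(x has_real_derivative (- lam * (x t + y t))) (at t)" for t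
    using assms(4,5) unfolding full_mean_periodic_def x_def y_def
    by (auto intro!: derivative_eq_intros simp: algebra_simps)
  have y_deriv: "(y has_real_derivative ((x t - y t) / eps)) (at t)" for t
    using assms(4,5) unfolding full_mean_periodic_def x_def y_def
    by (auto intro!: derivative_eq_intros simp: diff_divide_distrib)
  have "(V has_real_derivative (-2 * lam * ((x t)\<^sup>2 + (y t)\<^sup>2))) (at t)" for t
  proof -
    have "(V has_real_derivative
        (2 * x t * (- lam * (x t + y t)) + lam * eps * (2 * y t * ((x t - y t) / eps)))) (at t)"
      unfolding V_def by (rule derivative_eq_intros x_deriv y_deriv refl | simp)+
    moreover have "2 * x t * (- lam * (x t + y t)) + lam * eps * (2 * y t * ((x t - y t) / eps))
        = -2 * lam * ((x t)\<^sup>2 + (y t)\<^sup>2)"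
      using \<open>eps > 0\<close> by (simp add: field_simps power2_eq_square)
    ultimately show ?thesis by simp
  qed
  moreover have "V (t + 2 * pi / a) = V t" for t
    using assms(4,5) unfolding full_mean_periodic_def V_def x_def y_def by simp
  ultimately have "-2 * lam * ((x s)\<^sup>2 + (y s)\<^sup>2) = 0" for s
    using periodic_deriv_nonpos_imp_deriv_zero[of V "\<lambda>t. -2 * lam * ((x t)\<^sup>2 + (y t)\<^sup>2)" "2 * pi / a"]
      assms(1,2) by simp
  then have "x s = 0 \<and> y s = 0" for s
    using assms(1) by (simp add: add_nonneg_eq_0_iff)
  then show ?thesis unfolding x_def y_def by auto
qed

definition harmonic :: "real \<Rightarrow> complex \<Rightarrow> real \<Rightarrow> real" where
  "harmonic a w t = Im (w * cis (a * t))"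

lemma harmonic_eq: "harmonic a w t = Re w * sin (a * t) + Im w * cos (a * t)"
  unfolding harmonic_def by (simp add: cis.sel)

lemma harmonic_add: "harmonic a (v + w) t = harmonic a v t + harmonic a w t"
  unfolding harmonic_eq by (simp add: algebra_simps)

lemma harmonic_diff: "harmonic a (v - w) t = harmonic a v t - harmonic a w t"
  unfolding harmonic_eq by (simp add: algebra_simps)

lemma harmonic_of_real_mult: "harmonic a (of_real c * w) t = c * harmonic a w t"
  unfolding harmonic_eq by (simp add: algebra_simps)

lemma harmonic_of_real: "harmonic a (of_real c) t = c * sin (a * t)"
  unfolding harmonic_eq by simp

lemma harmonic_has_real_derivative:
  "(harmonic a w has_real_derivative harmonic a (\<i> * a * w) t) (at t)"
  unfolding harmonic_eq[abs_def] harmonic_eq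
  by (rule derivative_eq_intros refl | simp add: algebra_simps)+

lemma harmonic_periodic:
  assumes "a > 0"
  shows "harmonic a w (t + 2 * pi / a) = harmonic a w t"
proof -
  have "a * (t + 2 * pi / a) = a * t + 2 * pi" using assms by (simp add: field_simps)
  then show ?thesis unfolding harmonic_eq by simp
qed

lemma abs_harmonic_le: "\<bar>harmonic a w t\<bar> \<le> cmod w"
  unfolding harmonic_def using abs_Im_le_cmod[of "w * cis (a * t)"] by (simp add: norm_mult)

lemma continuous_on_harmonic: "continuous_on S (harmonic a w)"
  unfolding harmonic_eq[abs_def] by (intro continuous_intros)

definition resonance :: "real \<Rightarrow> real \<Rightarrow> real \<Rightarrow> complex" where
  "resonance lam a eps = Complex (2 * lam - a\<^sup>2 * eps) (a * (1 + lam * eps))"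

lemma norm_resonance_ge:
  assumes "lam > 0" "a > 0" "eps \<ge> 0"
  shows "a \<le> cmod (resonance lam a eps)"
proof -
  have "a \<le> a * (1 + lam * eps)"
    using assms by simp
  also have "\<dots> \<le> cmod (resonance lam a eps)"
    using abs_Im_le_cmod[of "resonance lam a eps"] unfolding resonance_def by simp
  finally show ?thesis .
qed

definition full_amplitude :: "real \<Rightarrow> real \<Rightarrow> real \<Rightarrow> real \<Rightarrow> complex" where
  "full_amplitude lam a E eps = of_real E / resonance lam a eps"

lemma full_mean_periodic_harmonic:
  assumes "lam > 0" "a > 0" "eps > 0"
  shows "full_mean_periodic lam a E eps
    (harmonic a ((1 + \<i> * a * eps) * full_amplitude lam a E eps)) (harmonic a (full_amplitude lam a E eps))"
proof -
  define B where "B = full_amplitude lam a E eps"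
  let ?A = "(1 + \<i> * a * eps) * B"
  have "resonance lam a eps \<noteq> 0"
    using norm_resonance_ge[of lam a eps] assms(1-3) by auto
  then have "B * resonance lam a eps = E"
    unfolding B_def full_amplitude_def by simp
  then have fast_eq: "\<i> * a * ?A = of_real (- lam) * (?A + B) + of_real E"
    unfolding resonance_def complex_eq_iff by (simp add: algebra_simps power2_eq_square)
  have slow_eq: "\<i> * a * B = of_real (1 / eps) * (?A - B)"
    using \<open>eps > 0\<close> by (simp add: field_simps)
  have "harmonic a (\<i> * a * ?A) t = - lam * (harmonic a ?A t + harmonic a B t) + E * sin (a * t)"
    "harmonic a (\<i> * a * B) t = (harmonic a ?A t - harmonic a B t) / eps" for t
    unfolding fast_eq slow_eq harmonic_add harmonic_diff harmonic_of_real_mult harmonic_of_real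
    by simp_all
  then show ?thesis
    unfolding full_mean_periodic_def B_def[symmetric]
    using harmonic_has_real_derivative harmonic_periodic[OF assms(2)] by metis
qed

lemma avg_mean_periodic_harmonic:
  assumes "lam > 0" "a > 0"
  shows "avg_mean_periodic lam a E (harmonic a (full_amplitude lam a E 0))"
proof -
  let ?B = "full_amplitude lam a E 0"
  have "resonance lam a 0 \<noteq> 0"
    using norm_resonance_ge[of lam a 0] assms by auto
  then have "?B * resonance lam a 0 = E"
    unfolding full_amplitude_def by simp
  then have amplitude_eq: "\<i> * a * ?B = of_real (- 2 * lam) * ?B + of_real E"
    unfolding resonance_def complex_eq_iff by (simp add: algebra_simps)
  have "harmonic a (\<i> * a * ?B) t = - 2 * lam * harmonic a ?B t + E * sin (a * t)" for t
    unfolding amplitude_eq harmonic_add harmonic_of_real_mult harmonic_of_real by simp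
  then show ?thesis
    unfolding avg_mean_periodic_def
    using harmonic_has_real_derivative harmonic_periodic[OF assms(2)] by metis
qed

lemma muX_per_eq:
  assumes "lam > 0" "a > 0" "eps > 0"
  shows "muX_per lam a E eps = harmonic a ((1 + \<i> * a * eps) * full_amplitude lam a E eps)"
proof -
  let ?p = "(harmonic a ((1 + \<i> * a * eps) * full_amplitude lam a E eps),
             harmonic a (full_amplitude lam a E eps))"
  have "(THE p. full_mean_periodic lam a E eps (fst p) (snd p)) = ?p"
  proof (rule the_equality)
    fix p assume "full_mean_periodic lam a E eps (fst p) (snd p)"
    then show "p = ?p"
      using full_mean_periodic_unique[OF assms] full_mean_periodic_harmonic[OF assms]
      by (simp add: prod_eq_iff) blast
  qed (use full_mean_periodic_harmonic[OF assms] in simp)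
  then show ?thesis unfolding muX_per_def by simp
qed

lemma barmuX_per_eq:
  assumes "lam > 0" "a > 0"
  shows "barmuX_per lam a E = harmonic a (full_amplitude lam a E 0)"
  unfolding barmuX_per_def
  using avg_mean_periodic_harmonic[OF assms] avg_mean_periodic_unique[OF assms]
  by (intro the_equality) auto

lemma amplitude_error_eq:
  assumes "lam > 0" "a > 0" "eps \<ge> 0"
  shows "(1 + \<i> * a * eps) * full_amplitude lam a E eps - full_amplitude lam a E 0
    = eps * (\<i> * a * lam * E / (resonance lam a eps * resonance lam a 0))"
proof -
  let ?z = "resonance lam a eps" and ?w = "resonance lam a 0"
  have "?z \<noteq> 0" "?w \<noteq> 0"
    using norm_resonance_ge[of lam a] assms by fastforce+
  then have "(1 + \<i> * a * eps) * full_amplitude lam a E eps - full_amplitude lam a E 0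
      = E * ((1 + \<i> * a * eps) * ?w - ?z) / (?z * ?w)"
    unfolding full_amplitude_def by (simp add: divide_simps) (simp add: algebra_simps)
  also have "(1 + \<i> * a * eps) * ?w - ?z = eps * (\<i> * a * lam)"
    unfolding resonance_def complex_eq_iff by (simp add: algebra_simps power2_eq_square)
  finally show ?thesis by simp
qed

lemma norm_amplitude_error_le:
  assumes "lam > 0" "a > 0" "eps \<ge> 0"
  shows "cmod ((1 + \<i> * a * eps) * full_amplitude lam a E eps - full_amplitude lam a E 0)
    \<le> eps * (lam * \<bar>E\<bar> / a)"
proof -
  let ?n = "cmod (resonance lam a eps) * cmod (resonance lam a 0)"
  have "a * a \<le> ?n"
    using norm_resonance_ge[of lam a] assms by (intro mult_mono) auto
  then have "a * lam * \<bar>E\<bar> / ?n \<le> a * lam * \<bar>E\<bar> / (a * a)"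
    using assms by (intro frac_le) auto
  also have "\<dots> = lam * \<bar>E\<bar> / a"
    using assms by simp
  finally have "eps * (a * lam * \<bar>E\<bar> / ?n) \<le> eps * (lam * \<bar>E\<bar> / a)"
    using assms by (intro mult_left_mono) auto
  then show ?thesis
    unfolding amplitude_error_eq[OF assms] using assms by (simp add: norm_mult norm_divide)
qed

lemma L2_norm_on_le:
  fixes f :: "real \<Rightarrow> real"
  assumes "T \<ge> 0" "continuous_on {0..T} f" "\<And>t. t \<in> {0..T} \<Longrightarrow> \<bar>f t\<bar> \<le> M"
  shows "L2_norm_on T f \<le> sqrt T * M"
proof -
  have "M \<ge> 0" using assms(1) assms(3)[of 0] by auto
  have "(f t)\<^sup>2 \<le> M\<^sup>2" if "t \<in> {0..T}" for t
    using power_mono[OF assms(3)[OF that], of 2] by simp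
  then have "integral {0..T} (\<lambda>t. (f t)\<^sup>2) \<le> integral {0..T} (\<lambda>t. M\<^sup>2)"
    using assms(2) by (intro integral_le integrable_continuous_interval continuous_intros) auto
  also have "\<dots> = T * M\<^sup>2" using assms(1) by simp
  finally show ?thesis
    unfolding L2_norm_on_def using \<open>M \<ge> 0\<close> real_sqrt_le_mono by (fastforce simp: real_sqrt_mult)
qed

theorem mainTheorem1:
  fixes lam a E :: real
  assumes "lam > 0" and "a > 0"
  shows "\<exists>C > 0. \<exists>eps0 > 0. \<forall>eps. 0 < eps \<and> eps < eps0 \<longrightarrow>
           L2_norm_on (2 * pi / a) (\<lambda>t. muX_per lam a E eps t - barmuX_per lam a E t) \<le> C * eps"
proof -
  define T where "T = 2 * pi / a"
  define C where "C = sqrt T * (lam * \<bar>E\<bar> / a + 1)"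
  have "T > 0" unfolding T_def using assms by simp
  then have "C > 0" unfolding C_def using assms by (simp add: add_nonneg_pos)
  have "L2_norm_on T (\<lambda>t. muX_per lam a E eps t - barmuX_per lam a E t) \<le> C * eps"
    if "eps > 0" for eps
  proof -
    let ?w = "(1 + \<i> * a * eps) * full_amplitude lam a E eps - full_amplitude lam a E 0"
    have error_eq: "(\<lambda>t. muX_per lam a E eps t - barmuX_per lam a E t) = harmonic a ?w"
      using muX_per_eq[OF assms that] barmuX_per_eq[OF assms]
      by (simp add: fun_eq_iff harmonic_diff)
    have "\<bar>harmonic a ?w t\<bar> \<le> eps * (lam * \<bar>E\<bar> / a)" for t
      using abs_harmonic_le norm_amplitude_error_le[OF assms] that by (meson less_imp_le order_trans)
    then have "L2_norm_on T (harmonic a ?w) \<le> sqrt T * (eps * (lam * \<bar>E\<bar> / a))"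
      using \<open>T > 0\<close> by (intro L2_norm_on_le continuous_on_harmonic) auto
    also have "\<dots> \<le> C * eps"
      unfolding C_def using that \<open>T > 0\<close> by (simp add: algebra_simps)
    finally show ?thesis unfolding error_eq .
  qed
  then show ?thesis
    using \<open>C > 0\<close> zero_less_one unfolding T_def by blast
qed

end
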